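(* Let $\Lambda$ be a row-finite, source-free, strongly connected $k$-graph and let $x,y\in\Lambda^\infty$ be such that $\sigma^m(x)=\sigma^n(y)$ for some $m,n\in\mathbb N^k$. Then the representations $\pi_x$ on $\mathcal H_x$ and $\pi_y$ on $\mathcal H_y$ (described in the context) are unitarily equivalent.
   Context: $k$-graph: countable small category $\Lambda$ with degree functor $d:\Lambda\to\mathbb N^k$ with unique factorization; $r,s$ range/source, $\Lambda v=\{\lambda:s(\lambda)=v\}$; row-finite, source-free and strongly connected ($v\Lambda w\ne\emptyset$ for all vertices) as usual. Infinite paths $x:\Omega_k\to\Lambda$ (degree-preserving functors from the $k$-graph $\Omega_k$ of pairs $(p,q)$, $p\le q$ in $\mathbb N^k$), shift $\sigma^m(x)(p,q)=x(p+m,q+m)$. Construction: for $x\in\Lambda^\infty$ write $\mathbf 1=(1,\dots,1)$, $x_i=x((i-1)\mathbf 1,i\mathbf 1)$, $v_i=r(x_i)$, $F_i=\Lambda v_i$; $\mathcal H_x=\varinjlim(\ell^2(F_i),\rho_i)$ with $\rho_i(\xi^i_\lambda)=\xi^{i+1}_{\lambda x_i}$, i.e. for $i\le j$ the basis vectors $\xi^i_\lambda$ and $\xi^j_\mu$ are identified iff $\mu=\lambda x_i\cdots x_{j-1}$, with classes $[\xi^i_\lambda]$. $\pi_x$ is the representation of $C^*(\Lambda)$ on $\mathcal H_x$ given by $\pi_x(t_\lambda)[\xi^i_\mu]=[\xi^i_{\lambda\mu}]$ if $s(\lambda)=r(\mu)$ and $0$ otherwise, where $\{t_\lambda\}$ are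 the Cuntz–Krieger generators of $C^*(\Lambda)$. *)

theory Defs
  imports "HOL-Analysis.Analysis" "HOL-Library.Function_Algebras"
begin

text \<open>A small category with object set verts, morphism set arrs, source src,
 range rng, composition comp (comp l m is l m, defined when src l = rng m),
 identities idv, and a degree functor deg into N^k, where N^k is modelled as
 functions 'k => nat for a finite index type 'k (so k = CARD('k)).\<close>

record ('v, 'a, 'k) kgraph =
  verts :: "'v set"
  arrs  :: "'a set"
  src   :: "'a \<Rightarrow> 'v"
  rng   :: "'a \<Rightarrow> 'v"
  comp  :: "'a \<Rightarrow> 'a \<Rightarrow> 'a"
  idv   :: "'v \<Rightarrow> 'a"
  deg   :: "'a \<Rightarrow> 'k \<Rightarrow> nat"

definition is_kgraph :: "('v, 'a, 'k) kgraph \<Rightarrow> bool" where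
  "is_kgraph G \<longleftrightarrow>
     countable (verts G) \<and> countable (arrs G) \<and>
     (\<forall>l\<in>arrs G. src G l \<in> verts G \<and> rng G l \<in> verts G) \<and>
     (\<forall>v\<in>verts G. idv G v \<in> arrs G \<and> src G (idv G v) = v \<and> rng G (idv G v) = v) \<and>
     (\<forall>l\<in>arrs G. \<forall>m\<in>arrs G. src G l = rng G m \<longrightarrow>
        comp G l m \<in> arrs G \<and> src G (comp G l m) = src G m \<and> rng G (comp G l m) = rng G l) \<and>
     (\<forall>l\<in>arrs G. comp G (idv G (rng G l)) l = l \<and> comp G l (idv G (src G l)) = l) \<and>
     (\<forall>l\<in>arrs G. \<forall>m\<in>arrs G. \<forall>n\<in>arrs G. src G l = rng G m \<longrightarrow> src G m = rng G n \<longrightarrow>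
        comp G (comp G l m) n = comp G l (comp G m n)) \<and>
     (\<forall>v\<in>verts G. deg G (idv G v) = 0) \<and>
     (\<forall>l\<in>arrs G. \<forall>m\<in>arrs G. src G l = rng G m \<longrightarrow>
        deg G (comp G l m) = deg G l + deg G m) \<and>
     (\<forall>l\<in>arrs G. \<forall>p q. deg G l = p + q \<longrightarrow>
        (\<exists>!(m, n). m \<in> arrs G \<and> n \<in> arrs G \<and> src G m = rng G n \<and>
                   l = comp G m n \<and> deg G m = p \<and> deg G n = q))"

definition row_finite :: "('v, 'a, 'k) kgraph \<Rightarrow> bool" where
  "row_finite G \<longleftrightarrow>
     (\<forall>v\<in>verts G. \<forall>p. finite {l\<in>arrs G. rng G l = v \<and> deg G l = p})"

definition source_free :: "('v, 'a, 'k) kgraph \<Rightarrow> bool" where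
  "source_free G \<longleftrightarrow>
     (\<forall>v\<in>verts G. \<forall>p. \<exists>l\<in>arrs G. rng G l = v \<and> deg G l = p)"

definition strongly_connected :: "('v, 'a, 'k) kgraph \<Rightarrow> bool" where
  "strongly_connected G \<longleftrightarrow>
     (\<forall>v\<in>verts G. \<forall>w\<in>verts G. \<exists>l\<in>arrs G. rng G l = v \<and> src G l = w)"

text \<open>An infinite path is a degree-preserving functor from Omega_k (morphisms
 (p,q) with p \<le> q, r(p,q)=p, s(p,q)=q, (p,q)(q,r)=(p,r)); we record its values
 x p q on the pairs p \<le> q (values off that set are irrelevant).\<close>

definition infpath :: "('v, 'a, 'k) kgraph \<Rightarrow> (('k \<Rightarrow> nat) \<Rightarrow> ('k \<Rightarrow> nat) \<Rightarrow> 'a) \<Rightarrow> bool" where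
  "infpath G x \<longleftrightarrow>
     (\<forall>p q. p \<le> q \<longrightarrow> x p q \<in> arrs G \<and> deg G (x p q) = q - p) \<and>
     (\<forall>p. x p p = idv G (rng G (x p p))) \<and>
     (\<forall>p q r. p \<le> q \<longrightarrow> q \<le> r \<longrightarrow>
        src G (x p q) = rng G (x q r) \<and> x p r = comp G (x p q) (x q r))"

definition shift :: "('k \<Rightarrow> nat) \<Rightarrow> (('k \<Rightarrow> nat) \<Rightarrow> ('k \<Rightarrow> nat) \<Rightarrow> 'a)
     \<Rightarrow> (('k \<Rightarrow> nat) \<Rightarrow> ('k \<Rightarrow> nat) \<Rightarrow> 'a)" where
  "shift m x = (\<lambda>p q. x (p + m) (q + m))"

text \<open>Basis labels: pairs (i, l) with i \<ge> 1 and l \<in> F_i = Lambda v_i,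
 v_i = r(x_i), x_i = x((i-1)1, i1).\<close>

definition basis_idx :: "('v, 'a, 'k) kgraph \<Rightarrow> (('k \<Rightarrow> nat) \<Rightarrow> ('k \<Rightarrow> nat) \<Rightarrow> 'a) \<Rightarrow> (nat \<times> 'a) set" where
  "basis_idx G x = {(i, l). 1 \<le> i \<and> l \<in> arrs G \<and>
       src G l = rng G (x (\<lambda>_. i - 1) (\<lambda>_. i))}"

text \<open>(i,l) ~ (j,m) for i \<le> j iff m = l x_i ... x_{j-1} = l x((i-1)1,(j-1)1).\<close>

definition ident_rel :: "('v, 'a, 'k) kgraph \<Rightarrow> (('k \<Rightarrow> nat) \<Rightarrow> ('k \<Rightarrow> nat) \<Rightarrow> 'a) \<Rightarrow> ((nat \<times> 'a) \<times> (nat \<times> 'a)) set" where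
  "ident_rel G x = {((i, l), (j, m)).
      (i, l) \<in> basis_idx G x \<and> (j, m) \<in> basis_idx G x \<and>
      ((i \<le> j \<and> m = comp G l (x (\<lambda>_. i - 1) (\<lambda>_. j - 1))) \<or>
       (j \<le> i \<and> l = comp G m (x (\<lambda>_. j - 1) (\<lambda>_. i - 1))))}"

definition Hbasis :: "('v, 'a, 'k) kgraph \<Rightarrow> (('k \<Rightarrow> nat) \<Rightarrow> ('k \<Rightarrow> nat) \<Rightarrow> 'a) \<Rightarrow> (nat \<times> 'a) set set" where
  "Hbasis G x = basis_idx G x // ident_rel G x"

text \<open>l^2 over an index set, as functions vanishing off the set.\<close>

definition l2 :: "'b set \<Rightarrow> ('b \<Rightarrow> complex) set" where
  "l2 S = {f. (\<forall>b. b \<notin> S \<longrightarrow> f b = 0) \<and> (\<lambda>b. (cmod (f b))\<^sup>2) summable_on S}"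

definition l2norm :: "'b set \<Rightarrow> ('b \<Rightarrow> complex) \<Rightarrow> real" where
  "l2norm S f = sqrt (infsum (\<lambda>b. (cmod (f b))\<^sup>2) S)"

definition unitary_between :: "'b set \<Rightarrow> 'c set \<Rightarrow> (('b \<Rightarrow> complex) \<Rightarrow> ('c \<Rightarrow> complex)) \<Rightarrow> bool" where
  "unitary_between S T U \<longleftrightarrow>
     (\<forall>f\<in>l2 S. U f \<in> l2 T) \<and>
     (\<forall>g\<in>l2 T. \<exists>f\<in>l2 S. U f = g) \<and>
     (\<forall>f\<in>l2 S. \<forall>g\<in>l2 S. U (f + g) = U f + U g) \<and>
     (\<forall>f\<in>l2 S. \<forall>c. U (\<lambda>b. c * f b) = (\<lambda>b. c * U f b)) \<and>
     (\<forall>f\<in>l2 S. l2norm T (U f) = l2norm S f)"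

text \<open>pi_x(t_l): [xi^i_m] \<mapsto> [xi^i_{l m}] if s(l) = r(m), 0 otherwise, extended
 to l^2 by linearity and continuity: coefficient of the image at a class c' is the
 coefficient at the (unique) class c mapped to c'.\<close>

definition maps_to :: "('v, 'a, 'k) kgraph \<Rightarrow> (('k \<Rightarrow> nat) \<Rightarrow> ('k \<Rightarrow> nat) \<Rightarrow> 'a) \<Rightarrow> 'a
     \<Rightarrow> (nat \<times> 'a) set \<Rightarrow> (nat \<times> 'a) set \<Rightarrow> bool" where
  "maps_to G x l c c' \<longleftrightarrow> c \<in> Hbasis G x \<and> c' \<in> Hbasis G x \<and>
     (\<exists>i m. (i, m) \<in> c \<and> src G l = rng G m \<and> (i, comp G l m) \<in> c')"

definition pi_rep :: "('v, 'a, 'k) kgraph \<Rightarrow> (('k \<Rightarrow> nat) \<Rightarrow> ('k \<Rightarrow> nat) \<Rightarrow> 'a) \<Rightarrow> 'a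
     \<Rightarrow> ((nat \<times> 'a) set \<Rightarrow> complex) \<Rightarrow> ((nat \<times> 'a) set \<Rightarrow> complex)" where
  "pi_rep G x l f = (\<lambda>c'. if \<exists>c. maps_to G x l c c'
                         then f (THE c. maps_to G x l c c') else 0)"

end

theory Submission
  imports Defs
begin

(* The classes [xi^i_l] form an orthonormal basis of H_x on which pi_x(t_l) acts through the
   partial map "class of (i, m) goes to class of (i, l m)".  Any bijection between the bases of
   H_x and H_y that respects these partial maps is therefore a permutation of coordinates
   intertwining pi_x and pi_y.  For t <= T 1, sending the class of (i, mu) in H_{sigma^t x} to
   the class of (i + T, mu x((i - 1) 1 + t, (i - 1 + T) 1)) in H_x is such a bijection: two labels
   are compared by pushing both to a common level N, where it comes down to cancellation in the
   category Lambda.  Since H_x only depends on the path,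
   H_x ~ H_{sigma^m x} = H_{sigma^n y} ~ H_y. *)

locale k_graph =
  fixes G :: "('v, 'a, 'k) kgraph"
  assumes is_kgraph: "is_kgraph G"
begin

lemma comp_closed:
  assumes "l \<in> arrs G" "m \<in> arrs G" "src G l = rng G m"
  shows "comp G l m \<in> arrs G" "src G (comp G l m) = src G m" "rng G (comp G l m) = rng G l"
  using is_kgraph assms unfolding is_kgraph_def by simp_all

lemma deg_comp:
  assumes "l \<in> arrs G" "m \<in> arrs G" "src G l = rng G m"
  shows "deg G (comp G l m) = deg G l + deg G m"
  using is_kgraph assms unfolding is_kgraph_def by simp

lemma comp_assoc:
  assumes "l \<in> arrs G" "m \<in> arrs G" "n \<in> arrs G" "src G l = rng G m" "src G m = rng G n"
  shows "comp G (comp G l m) n = comp G l (comp G m n)"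
  using is_kgraph assms unfolding is_kgraph_def by simp

lemma comp_idv_right: "l \<in> arrs G \<Longrightarrow> comp G l (idv G (src G l)) = l"
  using is_kgraph unfolding is_kgraph_def by simp

lemma factorization_unique:
  assumes "a \<in> arrs G" "b \<in> arrs G" "c \<in> arrs G" "d \<in> arrs G"
    and "src G a = rng G b" "src G c = rng G d"
    and "comp G a b = comp G c d" "deg G a = deg G c"
  shows "a = c \<and> b = d"
proof -
  let ?ab = "comp G a b"
  define factors where "factors = (\<lambda>(m, n). m \<in> arrs G \<and> n \<in> arrs G \<and> src G m = rng G n \<and>
      ?ab = comp G m n \<and> deg G m = deg G a \<and> deg G n = deg G b)"
  have deg_ab: "deg G ?ab = deg G a + deg G b" "deg G ?ab = deg G c + deg G d"
    using deg_comp assms by metis+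
  have "?ab \<in> arrs G" using comp_closed assms by blast
  moreover have "\<forall>l\<in>arrs G. \<forall>p q. deg G l = p + q \<longrightarrow>
      (\<exists>!(m, n). m \<in> arrs G \<and> n \<in> arrs G \<and> src G m = rng G n \<and>
        l = comp G m n \<and> deg G m = p \<and> deg G n = q)"
    using is_kgraph unfolding is_kgraph_def by (elim conjE) assumption
  ultimately have "\<exists>!mn. factors mn"
    using deg_ab(1) unfolding factors_def by blast
  moreover have "factors (a, b)" "factors (c, d)"
    using assms deg_ab unfolding factors_def by simp_all
  ultimately show ?thesis by blast
qed

lemma comp_cancel_right:
  assumes "a \<in> arrs G" "b \<in> arrs G" "w \<in> arrs G" "src G a = rng G w" "src G b = rng G w"
    and "comp G a w = comp G b w"
  shows "a = b"
proof -
  have "deg G a + deg G w = deg G b + deg G w" using deg_comp assms by metis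
  then have "deg G a = deg G b" by simp
  then show ?thesis using factorization_unique assms by blast
qed

lemma comp_cancel_left:
  assumes "a \<in> arrs G" "b \<in> arrs G" "l \<in> arrs G" "src G l = rng G a" "src G l = rng G b"
    and "comp G l a = comp G l b"
  shows "a = b"
  using factorization_unique assms by blast

end

definition diag :: "nat \<Rightarrow> 'k \<Rightarrow> nat" where
  "diag i = (\<lambda>_. i)"

lemma diag_le_diag_iff [simp]: "diag i \<le> diag j \<longleftrightarrow> i \<le> j"
  by (simp add: diag_def le_fun_def)

locale k_graph_path = k_graph G for G :: "('v, 'a, 'k) kgraph" +
  fixes x :: "('k \<Rightarrow> nat) \<Rightarrow> ('k \<Rightarrow> nat) \<Rightarrow> 'a"
  assumes infpath: "infpath G x"
begin

definition vertex :: "('k \<Rightarrow> nat) \<Rightarrow> 'v" where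
  "vertex p = rng G (x p p)"

lemma path_in_arrs: "p \<le> q \<Longrightarrow> x p q \<in> arrs G"
  using infpath unfolding infpath_def by blast

lemma path_split: "p \<le> q \<Longrightarrow> q \<le> r \<Longrightarrow> x p r = comp G (x p q) (x q r)"
  using infpath unfolding infpath_def by blast

lemma src_path: "p \<le> q \<Longrightarrow> src G (x p q) = vertex q"
  using infpath unfolding infpath_def vertex_def by blast

lemma rng_path:
  assumes "p \<le> q"
  shows "rng G (x p q) = vertex p"
proof -
  have "src G (x p p) = rng G (x p q)" using infpath assms unfolding infpath_def by blast
  then have "rng G (comp G (x p p) (x p q)) = vertex p"
    using comp_closed path_in_arrs assms unfolding vertex_def by simp
  then show ?thesis using path_split[of p p q] assms by simp
qed

lemma path_diag: "x p p = idv G (vertex p)"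
  using infpath unfolding infpath_def vertex_def by blast

lemma comp_path:
  assumes "l \<in> arrs G" "src G l = vertex p" "p \<le> q"
  shows "comp G l (x p q) \<in> arrs G" "src G (comp G l (x p q)) = vertex q"
    "rng G (comp G l (x p q)) = rng G l"
  using comp_closed[of l "x p q"] assms path_in_arrs src_path rng_path by auto

lemma comp_path_split:
  assumes "l \<in> arrs G" "src G l = vertex p" "p \<le> q" "q \<le> r"
  shows "comp G l (x p r) = comp G (comp G l (x p q)) (x q r)"
  using comp_assoc[of l "x p q" "x q r"] path_split[of p q r] assms path_in_arrs src_path rng_path
  by auto

lemma basis_idx_iff:
  "(i, l) \<in> basis_idx G x \<longleftrightarrow> 1 \<le> i \<and> l \<in> arrs G \<and> src G l = vertex (diag (i - 1))"
proof -
  have "rng G (x (diag (i - 1)) (diag i)) = vertex (diag (i - 1))" by (simp add: rng_path)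
  then show ?thesis unfolding basis_idx_def diag_def by auto
qed

lemma basis_idx_comp_left_iff:
  assumes "l \<in> arrs G" "m \<in> arrs G" "src G l = rng G m"
  shows "(i, comp G l m) \<in> basis_idx G x \<longleftrightarrow> (i, m) \<in> basis_idx G x"
  using comp_closed[OF assms] assms by (simp add: basis_idx_iff)

lemma ident_rel_le_iff:
  assumes "i \<le> j"
  shows "((i, l), (j, m)) \<in> ident_rel G x \<longleftrightarrow>
    (i, l) \<in> basis_idx G x \<and> (j, m) \<in> basis_idx G x \<and>
     m = comp G l (x (diag (i - 1)) (diag (j - 1)))"
proof -
  have "comp G l (x (diag (i - 1)) (diag (i - 1))) = l" if "(i, l) \<in> basis_idx G x" for l
    using that comp_idv_right[of l] by (simp add: basis_idx_iff path_diag)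
  then show ?thesis using assms unfolding ident_rel_def diag_def by (auto simp: diag_def[symmetric])
qed

lemma ident_rel_sym: "(a, b) \<in> ident_rel G x \<Longrightarrow> (b, a) \<in> ident_rel G x"
  unfolding ident_rel_def by auto

lemma ident_rel_in_basis_idx: "(a, b) \<in> ident_rel G x \<Longrightarrow> a \<in> basis_idx G x \<and> b \<in> basis_idx G x"
  unfolding ident_rel_def by auto

text \<open>The image of \<open>\<xi>\<^sup>i\<^sub>l\<close> in \<open>\<ell>\<^sup>2(F\<^sub>N)\<close> under the connecting maps, for \<open>i \<le> N\<close>.\<close>

definition lift_to :: "nat \<Rightarrow> nat \<times> 'a \<Rightarrow> 'a" where
  "lift_to N a = comp G (snd a) (x (diag (fst a - 1)) (diag (N - 1)))"

lemma lift_to_props: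
  assumes "(i, l) \<in> basis_idx G x" "i \<le> N"
  shows "lift_to N (i, l) \<in> arrs G" "src G (lift_to N (i, l)) = vertex (diag (N - 1))"
    "rng G (lift_to N (i, l)) = rng G l"
  using comp_path[of l "diag (i - 1)" "diag (N - 1)"] assms
  by (auto simp: lift_to_def basis_idx_iff)

lemma lift_to_comp_left:
  assumes "(i, m) \<in> basis_idx G x" "i \<le> N" "l \<in> arrs G" "src G l = rng G m"
  shows "lift_to N (i, comp G l m) = comp G l (lift_to N (i, m))"
  using comp_assoc[of l m "x (diag (i - 1)) (diag (N - 1))"] assms path_in_arrs rng_path
  by (simp add: lift_to_def basis_idx_iff)

lemma ident_rel_iff_lift_to_eq_le:
  assumes "(i, l) \<in> basis_idx G x" "(j, m) \<in> basis_idx G x" "i \<le> j" "j \<le> N"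
  shows "((i, l), (j, m)) \<in> ident_rel G x \<longleftrightarrow> lift_to N (i, l) = lift_to N (j, m)"
proof -
  let ?u = "x (diag (i - 1)) (diag (j - 1))" and ?w = "x (diag (j - 1)) (diag (N - 1))"
  have l: "l \<in> arrs G" "src G l = vertex (diag (i - 1))"
    and m: "m \<in> arrs G" "src G m = vertex (diag (j - 1))"
    using assms by (auto simp: basis_idx_iff)
  have ij: "diag (i - 1) \<le> diag (j - 1)" and jN: "diag (j - 1) \<le> diag (N - 1)"
    using assms by auto
  have lu: "comp G l ?u \<in> arrs G" "src G (comp G l ?u) = vertex (diag (j - 1))"
    using comp_path[OF l ij] by auto
  have "lift_to N (i, l) = comp G (comp G l ?u) ?w"
    using comp_path_split[OF l ij jN] by (simp add: lift_to_def)
  moreover have "lift_to N (j, m) = comp G m ?w" by (simp add: lift_to_def)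
  ultimately have "lift_to N (i, l) = lift_to N (j, m) \<longleftrightarrow> m = comp G l ?u"
    using comp_cancel_right[of m "comp G l ?u" ?w] lu m jN path_in_arrs rng_path by metis
  then show ?thesis using ident_rel_le_iff[OF assms(3)] assms by auto
qed

lemma ident_rel_iff_lift_to_eq:
  assumes "a \<in> basis_idx G x" "b \<in> basis_idx G x" "fst a \<le> N" "fst b \<le> N"
  shows "(a, b) \<in> ident_rel G x \<longleftrightarrow> lift_to N a = lift_to N b"
proof (cases "fst a \<le> fst b")
  case True
  then show ?thesis
    using ident_rel_iff_lift_to_eq_le[of "fst a" "snd a" "fst b" "snd b" N] assms by simp
next
  case False
  then show ?thesis
    using ident_rel_iff_lift_to_eq_le[of "fst b" "snd b" "fst a" "snd a" N] assms ident_rel_sym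
    by (metis le_cases prod.collapse)
qed

lemma equiv_ident_rel: "equiv (basis_idx G x) (ident_rel G x)"
proof (rule equivI)
  show "ident_rel G x \<subseteq> basis_idx G x \<times> basis_idx G x"
    using ident_rel_in_basis_idx by auto
  show "refl_on (basis_idx G x) (ident_rel G x)"
  proof (rule refl_onI)
    fix a assume "a \<in> basis_idx G x"
    then show "(a, a) \<in> ident_rel G x" using ident_rel_iff_lift_to_eq[of a a "fst a"] by simp
  qed
  show "sym (ident_rel G x)"
    using ident_rel_sym by (auto intro: symI)
  show "trans (ident_rel G x)"
  proof (rule transI)
    fix a b c assume ab: "(a, b) \<in> ident_rel G x" and bc: "(b, c) \<in> ident_rel G x"
    define N where "N = max (fst a) (max (fst b) (fst c))"
    have "fst a \<le> N" "fst b \<le> N" "fst c \<le> N" unfolding N_def by auto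
    then show "(a, c) \<in> ident_rel G x"
      using ident_rel_iff_lift_to_eq ab bc ident_rel_in_basis_idx by metis
  qed
qed

lemma ident_rel_rng:
  assumes "((i, m), (j, m')) \<in> ident_rel G x"
  shows "rng G m = rng G m'"
proof -
  define N where "N = max i j"
  have N: "i \<le> N" "j \<le> N" unfolding N_def by auto
  have b: "(i, m) \<in> basis_idx G x" "(j, m') \<in> basis_idx G x"
    using ident_rel_in_basis_idx[OF assms] by auto
  have "lift_to N (i, m) = lift_to N (j, m')"
    using ident_rel_iff_lift_to_eq[of "(i, m)" "(j, m')" N] assms b N by simp
  then show ?thesis using lift_to_props(3) b N by metis
qed

lemma ident_rel_comp_left:
  assumes "((i, m), (j, m')) \<in> ident_rel G x" "l \<in> arrs G" "src G l = rng G m"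
  shows "((i, comp G l m), (j, comp G l m')) \<in> ident_rel G x"
proof -
  define N where "N = max i j"
  have N: "i \<le> N" "j \<le> N" unfolding N_def by auto
  have b: "(i, m) \<in> basis_idx G x" "(j, m') \<in> basis_idx G x"
    using ident_rel_in_basis_idx[OF assms(1)] by auto
  have l': "src G l = rng G m'" using ident_rel_rng[OF assms(1)] assms(3) by simp
  have "lift_to N (i, m) = lift_to N (j, m')"
    using ident_rel_iff_lift_to_eq[of "(i, m)" "(j, m')" N] assms(1) b N by simp
  then have "lift_to N (i, comp G l m) = lift_to N (j, comp G l m')"
    using lift_to_comp_left b N assms(2,3) l' by metis
  moreover have "(i, comp G l m) \<in> basis_idx G x" "(j, comp G l m') \<in> basis_idx G x"
    using basis_idx_comp_left_iff[OF assms(2) _ assms(3)]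
      basis_idx_comp_left_iff[OF assms(2) _ l'] b
    by (auto simp: basis_idx_iff)
  ultimately show ?thesis using ident_rel_iff_lift_to_eq N by simp
qed

lemma ident_rel_cancel_left:
  assumes "((i, comp G l m), (j, comp G l m')) \<in> ident_rel G x"
    and "l \<in> arrs G" "m \<in> arrs G" "m' \<in> arrs G" "src G l = rng G m" "src G l = rng G m'"
  shows "((i, m), (j, m')) \<in> ident_rel G x"
proof -
  define N where "N = max i j"
  have N: "i \<le> N" "j \<le> N" unfolding N_def by auto
  have b: "(i, m) \<in> basis_idx G x" "(j, m') \<in> basis_idx G x"
    using ident_rel_in_basis_idx[OF assms(1)] basis_idx_comp_left_iff assms(2-6) by blast+
  have "comp G l (lift_to N (i, m)) = comp G l (lift_to N (j, m'))"
    using ident_rel_iff_lift_to_eq[of "(i, comp G l m)" "(j, comp G l m')" N] assms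
      ident_rel_in_basis_idx[OF assms(1)] lift_to_comp_left b N by simp
  then have "lift_to N (i, m) = lift_to N (j, m')"
    using comp_cancel_left lift_to_props b N assms(2,5,6) by metis
  then show ?thesis using ident_rel_iff_lift_to_eq b N by simp
qed

end

context k_graph_path
begin

lemma maps_to_iff:
  assumes "c \<in> Hbasis G x" "c' \<in> Hbasis G x" "(i, m) \<in> c" "l \<in> arrs G"
  shows "maps_to G x l c c' \<longleftrightarrow> src G l = rng G m \<and> (i, comp G l m) \<in> c'"
proof
  assume "maps_to G x l c c'"
  then obtain i0 m0 where h: "(i0, m0) \<in> c" "src G l = rng G m0" "(i0, comp G l m0) \<in> c'"
    unfolding maps_to_def by blast
  have rel: "((i0, m0), (i, m)) \<in> ident_rel G x"
    using in_quotient_imp_in_rel[OF equiv_ident_rel] assms h unfolding Hbasis_def by blast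
  have "src G l = rng G m" using ident_rel_rng[OF rel] h(2) by simp
  moreover have "((i0, comp G l m0), (i, comp G l m)) \<in> ident_rel G x"
    using ident_rel_comp_left[OF rel assms(4) h(2)] .
  ultimately show "src G l = rng G m \<and> (i, comp G l m) \<in> c'"
    using h in_quotient_imp_closed[OF equiv_ident_rel] assms unfolding Hbasis_def by blast
qed (use assms in \<open>auto simp: maps_to_def\<close>)

lemma maps_to_source_unique:
  assumes "maps_to G x l c\<^sub>1 c'" "maps_to G x l c\<^sub>2 c'" "l \<in> arrs G"
  shows "c\<^sub>1 = c\<^sub>2"
proof -
  obtain i\<^sub>1 m\<^sub>1 where 1: "(i\<^sub>1, m\<^sub>1) \<in> c\<^sub>1" "src G l = rng G m\<^sub>1" "(i\<^sub>1, comp G l m\<^sub>1) \<in> c'"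
    using assms(1) unfolding maps_to_def by blast
  obtain i\<^sub>2 m\<^sub>2 where 2: "(i\<^sub>2, m\<^sub>2) \<in> c\<^sub>2" "src G l = rng G m\<^sub>2" "(i\<^sub>2, comp G l m\<^sub>2) \<in> c'"
    using assms(2) unfolding maps_to_def by blast
  have cls: "c\<^sub>1 \<in> Hbasis G x" "c\<^sub>2 \<in> Hbasis G x" "c' \<in> Hbasis G x"
    using assms unfolding maps_to_def by auto
  then have "(i\<^sub>1, m\<^sub>1) \<in> basis_idx G x" "(i\<^sub>2, m\<^sub>2) \<in> basis_idx G x"
    using in_quotient_imp_subset[OF equiv_ident_rel] 1(1) 2(1) unfolding Hbasis_def by blast+
  then have "m\<^sub>1 \<in> arrs G" "m\<^sub>2 \<in> arrs G" by (simp_all add: basis_idx_iff)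
  moreover have "((i\<^sub>1, comp G l m\<^sub>1), (i\<^sub>2, comp G l m\<^sub>2)) \<in> ident_rel G x"
    using in_quotient_imp_in_rel[OF equiv_ident_rel] cls 1 2 unfolding Hbasis_def by blast
  ultimately have "((i\<^sub>1, m\<^sub>1), (i\<^sub>2, m\<^sub>2)) \<in> ident_rel G x"
    using ident_rel_cancel_left assms(3) 1 2 by blast
  then show ?thesis
    using quotient_eqI[OF equiv_ident_rel] cls 1 2 unfolding Hbasis_def by blast
qed

lemma pi_rep_maps_to:
  assumes "maps_to G x l c c'" "l \<in> arrs G"
  shows "pi_rep G x l f c' = f c"
proof -
  have "(THE c. maps_to G x l c c') = c"
    using assms maps_to_source_unique by (intro the_equality) auto
  then show ?thesis using assms(1) unfolding pi_rep_def by auto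
qed

end

lemma infpath_shift:
  fixes x :: "('k \<Rightarrow> nat) \<Rightarrow> ('k \<Rightarrow> nat) \<Rightarrow> 'a"
  assumes "infpath G x"
  shows "infpath G (shift t x)"
proof -
  have "(q + t) - (p + t) = q - p" for p q :: "'k \<Rightarrow> nat"
    by (rule ext) (simp add: fun_diff_def)
  moreover have "p + t \<le> q + t" if "p \<le> q" for p q :: "'k \<Rightarrow> nat"
    using that by (rule add_right_mono)
  ultimately show ?thesis using assms unfolding infpath_def shift_def by metis
qed

locale k_graph_shifted_path = k_graph_path G x for G :: "('v, 'a, 'k) kgraph" and x +
  fixes t :: "'k \<Rightarrow> nat" and T :: nat
  assumes shift_le_diag: "t \<le> diag T"
begin

sublocale shifted: k_graph_path G "shift t x"
  by unfold_locales (rule infpath_shift[OF infpath])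

lemma shifted_vertex: "shifted.vertex p = vertex (p + t)"
  unfolding shifted.vertex_def by (simp add: vertex_def shift_def)

lemma diag_add_shift_le: "diag a + t \<le> diag (a + T)"
  using shift_le_diag unfolding le_fun_def diag_def by simp

lemma shifted_basis_idx_iff:
  "(i, l) \<in> basis_idx G (shift t x) \<longleftrightarrow> 1 \<le> i \<and> l \<in> arrs G \<and> src G l = vertex (diag (i - 1) + t)"
  by (simp add: shifted.basis_idx_iff shifted_vertex)

text \<open>A label \<open>\<mu>\<close> at level \<open>i\<close> of \<open>\<sigma>\<^sup>t x\<close> ends at degree \<open>(i - 1)\<one> + t\<close> of \<open>x\<close>;
  extending it along \<open>x\<close> to the diagonal degree \<open>(i - 1 + T)\<one>\<close> gives a label at level \<open>i + T\<close> of \<open>x\<close>.\<close>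

definition shift_idx :: "nat \<times> 'a \<Rightarrow> nat \<times> 'a" where
  "shift_idx a = (fst a + T, comp G (snd a) (x (diag (fst a - 1) + t) (diag (fst a - 1 + T))))"

lemma shift_idx_in_basis_idx:
  assumes "(i, l) \<in> basis_idx G (shift t x)"
  shows "shift_idx (i, l) \<in> basis_idx G x"
proof -
  have l: "1 \<le> i" "l \<in> arrs G" "src G l = vertex (diag (i - 1) + t)"
    using assms shifted_basis_idx_iff by auto
  then have "i + T - 1 = i - 1 + T" by simp
  then show ?thesis
    using comp_path[OF l(2,3) diag_add_shift_le] l unfolding shift_idx_def
    by (simp add: basis_idx_iff)
qed

lemma lift_to_shift_idx:
  assumes "(i, l) \<in> basis_idx G (shift t x)" "i \<le> N"
  shows "lift_to (N + T) (shift_idx (i, l))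
    = comp G (shifted.lift_to N (i, l)) (x (diag (N - 1) + t) (diag (N - 1 + T)))"
proof -
  have l: "1 \<le> i" "l \<in> arrs G" "src G l = vertex (diag (i - 1) + t)"
    using assms shifted_basis_idx_iff by auto
  have index: "i + T - 1 = i - 1 + T" "N + T - 1 = N - 1 + T" using l assms by auto
  have le: "diag (i - 1 + T) \<le> diag (N - 1 + T)" "diag (i - 1) + t \<le> diag (N - 1) + t"
    using assms by (simp_all add: add_right_mono)
  have "lift_to (N + T) (shift_idx (i, l))
      = comp G (comp G l (x (diag (i - 1) + t) (diag (i - 1 + T))))
          (x (diag (i - 1 + T)) (diag (N - 1 + T)))"
    unfolding lift_to_def shift_idx_def using index by simp
  also have "\<dots> = comp G l (x (diag (i - 1) + t) (diag (N - 1 + T)))"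
    using comp_path_split[OF l(2,3) diag_add_shift_le le(1)] by simp
  also have "\<dots> = comp G (comp G l (x (diag (i - 1) + t) (diag (N - 1) + t)))
      (x (diag (N - 1) + t) (diag (N - 1 + T)))"
    using comp_path_split[OF l(2,3) le(2) diag_add_shift_le] by simp
  finally show ?thesis unfolding shifted.lift_to_def by (simp add: shift_def)
qed

lemma shift_idx_ident_rel_iff:
  assumes "a \<in> basis_idx G (shift t x)" "b \<in> basis_idx G (shift t x)"
  shows "(a, b) \<in> ident_rel G (shift t x) \<longleftrightarrow> (shift_idx a, shift_idx b) \<in> ident_rel G x"
proof -
  obtain i l j m where ab: "a = (i, l)" "b = (j, m)" by (cases a, cases b)
  define N where "N = max i j"
  have N: "i \<le> N" "j \<le> N" unfolding N_def by auto
  let ?w = "x (diag (N - 1) + t) (diag (N - 1 + T))"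
  have w: "?w \<in> arrs G" "rng G ?w = vertex (diag (N - 1) + t)"
    using path_in_arrs rng_path diag_add_shift_le by auto
  have "(a, b) \<in> ident_rel G (shift t x) \<longleftrightarrow> shifted.lift_to N a = shifted.lift_to N b"
    using shifted.ident_rel_iff_lift_to_eq assms N ab by simp
  also have "\<dots> \<longleftrightarrow> comp G (shifted.lift_to N a) ?w = comp G (shifted.lift_to N b) ?w"
    using comp_cancel_right[of "shifted.lift_to N a" "shifted.lift_to N b" ?w] w
      shifted.lift_to_props assms N ab by (auto simp: shifted_vertex)
  also have "\<dots> \<longleftrightarrow> lift_to (N + T) (shift_idx a) = lift_to (N + T) (shift_idx b)"
    using lift_to_shift_idx assms N ab by simp
  also have "\<dots> \<longleftrightarrow> (shift_idx a, shift_idx b) \<in> ident_rel G x"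
    using ident_rel_iff_lift_to_eq[of "shift_idx a" "shift_idx b" "N + T"] shift_idx_in_basis_idx
      assms N ab unfolding shift_idx_def by auto
  finally show ?thesis .
qed

lemma shift_idx_surj_mod_ident_rel:
  assumes "b \<in> basis_idx G x"
  shows "\<exists>a\<in>basis_idx G (shift t x). (shift_idx a, b) \<in> ident_rel G x"
proof -
  obtain i l where b: "b = (i, l)" by (cases b)
  have l: "1 \<le> i" "l \<in> arrs G" "src G l = vertex (diag (i - 1))"
    using assms b basis_idx_iff by auto
  have le: "diag (i - 1) \<le> diag (i - 1) + t" by (simp add: le_fun_def)
  define \<mu> where "\<mu> = comp G l (x (diag (i - 1)) (diag (i - 1) + t))"
  have a: "(i, \<mu>) \<in> basis_idx G (shift t x)"
    using comp_path[OF l(2,3) le] l unfolding \<mu>_def by (simp add: shifted_basis_idx_iff)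
  have "shift_idx (i, \<mu>) = (i + T, comp G l (x (diag (i - 1)) (diag (i - 1 + T))))"
    unfolding shift_idx_def \<mu>_def using comp_path_split[OF l(2,3) le diag_add_shift_le] by simp
  moreover have "i + T - 1 = i - 1 + T" using l by simp
  ultimately have "(b, shift_idx (i, \<mu>)) \<in> ident_rel G x"
    using ident_rel_le_iff[of i "i + T" l] shift_idx_in_basis_idx[OF a] assms b by auto
  then show ?thesis using a ident_rel_sym by blast
qed

definition shift_class :: "(nat \<times> 'a) set \<Rightarrow> (nat \<times> 'a) set" where
  "shift_class c = ident_rel G x `` (shift_idx ` c)"

lemma shift_class_eq:
  assumes "a \<in> basis_idx G (shift t x)"
  shows "shift_class (ident_rel G (shift t x) `` {a}) = ident_rel G x `` {shift_idx a}"
proof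
  show "ident_rel G x `` {shift_idx a} \<subseteq> shift_class (ident_rel G (shift t x) `` {a})"
    unfolding shift_class_def using shifted.equiv_ident_rel assms equiv_class_self by fastforce
  show "shift_class (ident_rel G (shift t x) `` {a}) \<subseteq> ident_rel G x `` {shift_idx a}"
  proof
    fix b assume "b \<in> shift_class (ident_rel G (shift t x) `` {a})"
    then obtain a' where a': "(a, a') \<in> ident_rel G (shift t x)" "(shift_idx a', b) \<in> ident_rel G x"
      unfolding shift_class_def by blast
    then have "(shift_idx a, shift_idx a') \<in> ident_rel G x"
      using shift_idx_ident_rel_iff shifted.ident_rel_in_basis_idx assms by blast
    then show "b \<in> ident_rel G x `` {shift_idx a}"
      using a' equiv_ident_rel by (meson Image_singleton_iff equivE transD)
  qed
qed

end

definition intertwining_bij ::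
    "('v, 'a, 'k) kgraph \<Rightarrow> (('k \<Rightarrow> nat) \<Rightarrow> ('k \<Rightarrow> nat) \<Rightarrow> 'a) \<Rightarrow> (('k \<Rightarrow> nat) \<Rightarrow> ('k \<Rightarrow> nat) \<Rightarrow> 'a)
      \<Rightarrow> ((nat \<times> 'a) set \<Rightarrow> (nat \<times> 'a) set) \<Rightarrow> bool" where
  "intertwining_bij G x y \<phi> \<longleftrightarrow> bij_betw \<phi> (Hbasis G x) (Hbasis G y) \<and>
     (\<forall>l\<in>arrs G. \<forall>c\<in>Hbasis G x. \<forall>c'\<in>Hbasis G x. maps_to G x l c c' = maps_to G y l (\<phi> c) (\<phi> c'))"

context k_graph_shifted_path
begin

lemma bij_betw_shift_class: "bij_betw shift_class (Hbasis G (shift t x)) (Hbasis G x)"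
proof (rule bij_betw_imageI)
  show "inj_on shift_class (Hbasis G (shift t x))"
  proof (rule inj_onI)
    fix c d assume "c \<in> Hbasis G (shift t x)" "d \<in> Hbasis G (shift t x)"
      and eq: "shift_class c = shift_class d"
    then obtain a b where ab: "a \<in> basis_idx G (shift t x)" "c = ident_rel G (shift t x) `` {a}"
        "b \<in> basis_idx G (shift t x)" "d = ident_rel G (shift t x) `` {b}"
      unfolding Hbasis_def by (auto elim!: quotientE)
    have "ident_rel G x `` {shift_idx a} = ident_rel G x `` {shift_idx b}"
      using eq ab shift_class_eq by simp
    then have "(shift_idx a, shift_idx b) \<in> ident_rel G x"
      using eq_equiv_class_iff[OF equiv_ident_rel] shift_idx_in_basis_idx ab
      by (metis prod.collapse)
    then have "(a, b) \<in> ident_rel G (shift t x)" using shift_idx_ident_rel_iff ab by blast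
    then show "c = d" using ab equiv_class_eq[OF shifted.equiv_ident_rel] by simp
  qed
  show "shift_class ` Hbasis G (shift t x) = Hbasis G x"
  proof (intro equalityI subsetI)
    fix c assume "c \<in> shift_class ` Hbasis G (shift t x)"
    then obtain a where "a \<in> basis_idx G (shift t x)"
        "c = shift_class (ident_rel G (shift t x) `` {a})"
      unfolding Hbasis_def by (auto elim!: quotientE)
    then show "c \<in> Hbasis G x"
      using shift_class_eq shift_idx_in_basis_idx unfolding Hbasis_def
      by (metis prod.collapse quotientI)
  next
    fix c assume "c \<in> Hbasis G x"
    then obtain b where b: "b \<in> basis_idx G x" "c = ident_rel G x `` {b}"
      unfolding Hbasis_def by (auto elim!: quotientE)
    obtain a where a: "a \<in> basis_idx G (shift t x)" "(shift_idx a, b) \<in> ident_rel G x"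
      using shift_idx_surj_mod_ident_rel b by blast
    have "c = shift_class (ident_rel G (shift t x) `` {a})"
      using shift_class_eq a b equiv_class_eq[OF equiv_ident_rel] by simp
    then show "c \<in> shift_class ` Hbasis G (shift t x)"
      using a unfolding Hbasis_def by (auto intro: quotientI)
  qed
qed

lemma maps_to_shift_class_iff:
  assumes l: "l \<in> arrs G" and c: "c \<in> Hbasis G (shift t x)" and c': "c' \<in> Hbasis G (shift t x)"
  shows "maps_to G (shift t x) l c c' \<longleftrightarrow> maps_to G x l (shift_class c) (shift_class c')"
proof -
  obtain i \<mu> where a: "(i, \<mu>) \<in> basis_idx G (shift t x)" "c = ident_rel G (shift t x) `` {(i, \<mu>)}"
    using c unfolding Hbasis_def by (auto elim!: quotientE)
  obtain b where b: "b \<in> basis_idx G (shift t x)" "c' = ident_rel G (shift t x) `` {b}"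
    using c' unfolding Hbasis_def by (auto elim!: quotientE)
  have \<mu>: "\<mu> \<in> arrs G" "src G \<mu> = vertex (diag (i - 1) + t)"
    using a shifted_basis_idx_iff by auto
  let ?w = "x (diag (i - 1) + t) (diag (i - 1 + T))"
  have w: "?w \<in> arrs G" "rng G ?w = vertex (diag (i - 1) + t)"
    using path_in_arrs rng_path diag_add_shift_le by auto
  have shift_idx_comp: "shift_idx (i, comp G l \<mu>) = (i + T, comp G l (comp G \<mu> ?w))"
    if "src G l = rng G \<mu>"
    using comp_assoc[OF l \<mu>(1) w(1) that] \<mu> w unfolding shift_idx_def by simp
  have "shift_class c \<in> Hbasis G x" "shift_class c' \<in> Hbasis G x"
    using bij_betw_shift_class c c' bij_betwE by blast+
  moreover have "(i + T, comp G \<mu> ?w) \<in> shift_class c"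
    using shift_class_eq a equiv_class_self[OF equiv_ident_rel] shift_idx_in_basis_idx
    unfolding shift_idx_def by fastforce
  moreover have "rng G (comp G \<mu> ?w) = rng G \<mu>" using comp_closed \<mu> w by simp
  ultimately have "maps_to G x l (shift_class c) (shift_class c')
      \<longleftrightarrow> src G l = rng G \<mu> \<and> (i + T, comp G l (comp G \<mu> ?w)) \<in> shift_class c'"
    using maps_to_iff l by simp
  also have "\<dots> \<longleftrightarrow> src G l = rng G \<mu> \<and> (i, comp G l \<mu>) \<in> c'"
  proof (intro conj_cong refl)
    assume l\<mu>: "src G l = rng G \<mu>"
    then have l\<mu>_idx: "(i, comp G l \<mu>) \<in> basis_idx G (shift t x)"
      using shifted.basis_idx_comp_left_iff l \<mu>(1) a(1) by blast
    have "(i, comp G l \<mu>) \<in> c' \<longleftrightarrow> (b, (i, comp G l \<mu>)) \<in> ident_rel G (shift t x)"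
      using b by simp
    also have "\<dots> \<longleftrightarrow> (shift_idx b, shift_idx (i, comp G l \<mu>)) \<in> ident_rel G x"
      using shift_idx_ident_rel_iff b l\<mu>_idx by blast
    also have "\<dots> \<longleftrightarrow> shift_idx (i, comp G l \<mu>) \<in> shift_class c'"
      using shift_class_eq b by simp
    finally show "(i + T, comp G l (comp G \<mu> ?w)) \<in> shift_class c' \<longleftrightarrow> (i, comp G l \<mu>) \<in> c'"
      using shift_idx_comp[OF l\<mu>] by simp
  qed
  also have "\<dots> \<longleftrightarrow> maps_to G (shift t x) l c c'"
  proof -
    have "(i, \<mu>) \<in> c" using a equiv_class_self[OF shifted.equiv_ident_rel] by simp
    then show ?thesis using shifted.maps_to_iff[OF c c' _ l] by simp
  qed
  finally show ?thesis by simp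
qed

lemma intertwining_bij_shift_class: "intertwining_bij G (shift t x) x shift_class"
  unfolding intertwining_bij_def using bij_betw_shift_class maps_to_shift_class_iff by blast

end

lemma intertwining_bij_shift:
  fixes G :: "('v, 'a, 'k::finite) kgraph"
  assumes "is_kgraph G" "infpath G x"
  shows "\<exists>\<phi>. intertwining_bij G (shift t x) x \<phi>"
proof -
  have "t \<le> diag (sum t UNIV)" unfolding le_fun_def diag_def by (simp add: member_le_sum)
  then interpret k_graph_shifted_path G x t "sum t UNIV" using assms by unfold_locales
  show ?thesis using intertwining_bij_shift_class by blast
qed

lemma intertwining_bij_the_inv_into:
  assumes "intertwining_bij G x y \<phi>"
  shows "intertwining_bij G y x (the_inv_into (Hbasis G x) \<phi>)"
proof -
  let ?\<psi> = "the_inv_into (Hbasis G x) \<phi>"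
  have \<phi>: "bij_betw \<phi> (Hbasis G x) (Hbasis G y)" using assms unfolding intertwining_bij_def by blast
  have \<psi>: "bij_betw ?\<psi> (Hbasis G y) (Hbasis G x)" using bij_betw_the_inv_into[OF \<phi>] .
  have "maps_to G y l c c' = maps_to G x l (?\<psi> c) (?\<psi> c')"
    if "l \<in> arrs G" "c \<in> Hbasis G y" "c' \<in> Hbasis G y" for l c c'
  proof -
    have "?\<psi> c \<in> Hbasis G x" "?\<psi> c' \<in> Hbasis G x" using \<psi> that bij_betwE by blast+
    moreover have "\<phi> (?\<psi> c) = c" "\<phi> (?\<psi> c') = c'"
      using f_the_inv_into_f_bij_betw[OF \<phi>] that by auto
    ultimately show ?thesis using assms that unfolding intertwining_bij_def by metis
  qed
  then show ?thesis using \<psi> unfolding intertwining_bij_def by blast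
qed

lemma intertwining_bij_comp:
  assumes "intertwining_bij G x y \<phi>" "intertwining_bij G y z \<psi>"
  shows "intertwining_bij G x z (\<psi> \<circ> \<phi>)"
  using assms unfolding intertwining_bij_def by (auto intro: bij_betw_trans dest: bij_betwE)

lemma intertwining_bij_cong:
  assumes "\<forall>p q. p \<le> q \<longrightarrow> x p q = x' p q"
  shows "intertwining_bij G x y \<phi> \<longleftrightarrow> intertwining_bij G x' y \<phi>"
proof -
  have "x (diag (i - 1)) (diag i) = x' (diag (i - 1)) (diag i)" for i
    using assms by simp
  then have basis_idx: "basis_idx G x = basis_idx G x'"
    unfolding basis_idx_def diag_def by simp
  have "ident_rel G x = ident_rel G x'"
    using assms unfolding ident_rel_def basis_idx by (auto simp: le_fun_def)
  then have "Hbasis G x = Hbasis G x'" unfolding Hbasis_def basis_idx by simp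
  then have "maps_to G x = maps_to G x'" unfolding maps_to_def[abs_def] by simp
  with \<open>Hbasis G x = Hbasis G x'\<close> show ?thesis unfolding intertwining_bij_def by simp
qed

definition reindex :: "'c set \<Rightarrow> ('c \<Rightarrow> 'b) \<Rightarrow> ('b \<Rightarrow> complex) \<Rightarrow> 'c \<Rightarrow> complex" where
  "reindex T \<psi> f = (\<lambda>c. if c \<in> T then f (\<psi> c) else 0)"

lemma unitary_between_reindex:
  assumes \<psi>: "bij_betw \<psi> T S"
  shows "unitary_between S T (reindex T \<psi>)"
proof -
  have summable_iff: "(\<lambda>c. (cmod (reindex T \<psi> f c))\<^sup>2) summable_on T \<longleftrightarrow>
      (\<lambda>b. (cmod (f b))\<^sup>2) summable_on S"
    for f
  proof -
    have "(\<lambda>c. (cmod (reindex T \<psi> f c))\<^sup>2) summable_on T \<longleftrightarrow> (\<lambda>c. (cmod (f (\<psi> c)))\<^sup>2) summable_on T"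
      by (rule summable_on_cong) (simp add: reindex_def)
    also have "\<dots> \<longleftrightarrow> (\<lambda>b. (cmod (f b))\<^sup>2) summable_on S"
      by (rule summable_on_reindex_bij_betw[OF \<psi>])
    finally show ?thesis .
  qed
  have infsum_eq: "infsum (\<lambda>c. (cmod (reindex T \<psi> f c))\<^sup>2) T = infsum (\<lambda>b. (cmod (f b))\<^sup>2) S" for f
  proof -
    have "infsum (\<lambda>c. (cmod (reindex T \<psi> f c))\<^sup>2) T = infsum (\<lambda>c. (cmod (f (\<psi> c)))\<^sup>2) T"
      by (rule infsum_cong) (simp add: reindex_def)
    also have "\<dots> = infsum (\<lambda>b. (cmod (f b))\<^sup>2) S"
      by (rule infsum_reindex_bij_betw[OF \<psi>])
    finally show ?thesis .
  qed
  show ?thesis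
    unfolding unitary_between_def
  proof (intro conjI ballI allI)
    fix f assume "f \<in> l2 S"
    then show "reindex T \<psi> f \<in> l2 T" using summable_iff unfolding l2_def by (auto simp: reindex_def)
    show "l2norm T (reindex T \<psi> f) = l2norm S f" unfolding l2norm_def infsum_eq ..
  next
    fix g assume g: "g \<in> l2 T"
    define f where "f b = (if b \<in> S then g (inv_into T \<psi> b) else 0)" for b
    have "reindex T \<psi> f = g"
      using g \<psi> unfolding reindex_def f_def l2_def bij_betw_def by (auto simp: inv_into_f_f)
    moreover from this have "f \<in> l2 S" using g summable_iff[of f] unfolding l2_def f_def by auto
    ultimately show "\<exists>f\<in>l2 S. reindex T \<psi> f = g" by blast
  qed (auto simp: reindex_def)
qed

lemma reindex_pi_rep:
  assumes "is_kgraph G" "infpath G x" "infpath G y"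
    and \<psi>: "intertwining_bij G y x \<psi>" and l: "l \<in> arrs G"
  shows "reindex (Hbasis G y) \<psi> (pi_rep G x l f) = pi_rep G y l (reindex (Hbasis G y) \<psi> f)"
proof
  interpret x: k_graph_path G x using assms by unfold_locales
  interpret y: k_graph_path G y using assms by unfold_locales
  have bij: "bij_betw \<psi> (Hbasis G y) (Hbasis G x)"
    and maps_to_iff: "\<And>c c'. c \<in> Hbasis G y \<Longrightarrow> c' \<in> Hbasis G y \<Longrightarrow>
      maps_to G y l c c' \<longleftrightarrow> maps_to G x l (\<psi> c) (\<psi> c')"
    using \<psi> l unfolding intertwining_bij_def by blast+
  fix c'
  consider (target) d where "maps_to G y l d c'" | (no_target) "\<nexists>d. maps_to G y l d c'" by blast
  then show "reindex (Hbasis G y) \<psi> (pi_rep G x l f) c' =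
      pi_rep G y l (reindex (Hbasis G y) \<psi> f) c'"
  proof cases
    case target
    then have "d \<in> Hbasis G y" "c' \<in> Hbasis G y" unfolding maps_to_def by blast+
    moreover from this have "maps_to G x l (\<psi> d) (\<psi> c')" using maps_to_iff target by blast
    ultimately show ?thesis
      using x.pi_rep_maps_to y.pi_rep_maps_to target l unfolding reindex_def by simp
  next
    case no_target
    have "\<nexists>e. maps_to G x l e (\<psi> c')" if "c' \<in> Hbasis G y"
    proof
      assume "\<exists>e. maps_to G x l e (\<psi> c')"
      then obtain e where e: "maps_to G x l e (\<psi> c')" by blast
      then obtain d where "d \<in> Hbasis G y" "e = \<psi> d"
        using bij unfolding maps_to_def bij_betw_def by blast
      then show False using maps_to_iff e that no_target by blast
    qed
    then show ?thesis using no_target unfolding reindex_def pi_rep_def by simp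
  qed
qed

theorem mainTheorem4:
  fixes G :: "('v, 'a, 'k::finite) kgraph"
    and x y :: "('k \<Rightarrow> nat) \<Rightarrow> ('k \<Rightarrow> nat) \<Rightarrow> 'a"
    and m n :: "'k \<Rightarrow> nat"
  assumes "is_kgraph G" and "row_finite G" and "source_free G" and "strongly_connected G"
    and "infpath G x" and "infpath G y"
    and "\<forall>p q. p \<le> q \<longrightarrow> shift m x p q = shift n y p q"
  shows "\<exists>U. unitary_between (Hbasis G x) (Hbasis G y) U \<and>
             (\<forall>l\<in>arrs G. \<forall>f\<in>l2 (Hbasis G x). U (pi_rep G x l f) = pi_rep G y l (U f))"
proof -
  obtain \<phi>\<^sub>x where \<phi>\<^sub>x: "intertwining_bij G (shift m x) x \<phi>\<^sub>x"
    using intertwining_bij_shift[OF assms(1,5)] by blast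
  obtain \<phi>\<^sub>y where "intertwining_bij G (shift n y) y \<phi>\<^sub>y"
    using intertwining_bij_shift[OF assms(1,6)] by blast
  then have "intertwining_bij G (shift m x) y \<phi>\<^sub>y"
    using intertwining_bij_cong[OF assms(7)] by blast
  then have \<psi>: "intertwining_bij G y x (\<phi>\<^sub>x \<circ> the_inv_into (Hbasis G (shift m x)) \<phi>\<^sub>y)"
    (is "intertwining_bij G y x ?\<psi>")
    using intertwining_bij_comp[OF intertwining_bij_the_inv_into \<phi>\<^sub>x] by blast
  let ?U = "reindex (Hbasis G y) ?\<psi>"
  have "unitary_between (Hbasis G x) (Hbasis G y) ?U"
    using \<psi> unitary_between_reindex unfolding intertwining_bij_def by blast
  moreover have "\<forall>l\<in>arrs G. \<forall>f. ?U (pi_rep G x l f) = pi_rep G y l (?U f)"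
    using reindex_pi_rep[OF assms(1,5,6) \<psi>] by blast
  ultimately show ?thesis by blast
qed

end
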